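(* Let $(\mathcal{M},g)$ be a spacetime with a timelike Killing vector field $\vec K$, and let $(\bar x^0,\bar x^1,\bar x^2,\bar x^3)$ be Fermi-Walker-Killing coordinates, so that $\partial/\partial\bar x^0=\vec K$ and the metric components $\bar g_{\alpha\beta}$ do not depend on $\bar x^0$. Consider $N$ non-interacting particles, the $I$-th having spatial coordinates $\bar{\mathbf x}_I=(\bar x^1_I,\bar x^2_I,\bar x^3_I)$, spatial momentum coordinates $\bar{\mathbf p}_I=(\bar p_{I1},\bar p_{I2},\bar p_{I3})$ and proper time $\tau_I$, with one-particle Hamiltonian $H_I=\tfrac12\bar g^{\alpha\beta}\bar p_{I\alpha}\bar p_{I\beta}$, which is independent of $\bar x^0$ and is regarded as a smooth function of $(\bar{\mathbf x}_I,\bar{\mathbf p}_I)$. Assume each particle evolves by Hamilton's equations $d\bar x^j_I/d\tau_I=\partial H_I/\partial\bar p_{Ij}$, $d\bar p_{Ij}/d\tau_I=-\partial H_I/\partial \bar x^j_I$, and that $\tau_I=\tau_I(\bar x^0)$ is a smooth function of $\bar x^0$ alone. Then the vector field on the $6N$-dimensional phase space given by $$\vec v_H=\Big(\tfrac{d\bar{\mathbf x}_1}{d\bar x^0},\tfrac{d\bar{\mathbf p}_1}{d\bar x^0},\dots,\tfrac{d\bar{\mathbf x}_N}{d\bar x^0},\tfrac{d\bar{\mathbf p}_N}{d\bar x^0}\Big),\qquad \tfrac{d\bar{\mathbf x}_I}{d\bar x^0}=\tfrac{d\bar{\mathbf x}_I}{d\tau_I}\tfrac{d\tau_I}{d\bar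 x^0},\ \tfrac{d\bar{\mathbf p}_I}{d\bar x^0}=\tfrac{d\bar{\mathbf p}_I}{d\tau_I}\tfrac{d\tau_I}{d\bar x^0},$$ has zero divergence, and consequently the $N$-fold product of the 6-forms $d\bar x^1\wedge d\bar x^2\wedge d\bar x^3\wedge d\bar p_1\wedge d\bar p_2\wedge d\bar p_3$ (one for each particle) is invariant under the Hamiltonian flow parametrized by $\bar x^0$.
   Context: Fermi-Walker-Killing coordinates: given a timelike curve $\sigma$ whose four-velocity is the Killing field $\vec K$, and Fermi-Walker coordinates $X=(x^0,x^1,x^2,x^3)$ along $\sigma$ (built from a Fermi-Walker transported orthonormal tetrad with $e_0=\vec K$, via $x^0(\exp_{\sigma(\tau)}(\lambda^je_j(\tau)))=\tau$, $x^k(\exp_{\sigma(\tau)}(\lambda^je_j(\tau)))=\lambda^k$), and letting $\phi_s$ be the local flow of $\vec K$, the Fermi-Walker-Killing coordinates $\bar X$ are defined by $\bar X^{-1}(\bar x^0,\bar x^1,\bar x^2,\bar x^3)=\phi_{\bar x^0}(X^{-1}(0,\bar x^1,\bar x^2,\bar x^3))$. The momentum form coordinates in these coordinates are $\bar p_\alpha$. Sign conventions are those of Misner-Thorne-Wheeler. *)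

theory Defs
  imports "HOL-Analysis.Analysis"
begin

fun dderiv :: "'a::real_normed_vector list \<Rightarrow> ('a \<Rightarrow> 'b::real_normed_vector) \<Rightarrow> 'a \<Rightarrow> 'b" where
  "dderiv [] f = f"
| "dderiv (v # vs) f = (\<lambda>x. frechet_derivative (dderiv vs f) (at x) v)"

definition smooth_on :: "'a::real_normed_vector set \<Rightarrow> ('a \<Rightarrow> 'b::real_normed_vector) \<Rightarrow> bool" where
  "smooth_on S f \<longleftrightarrow> open S \<and> (\<forall>vs. dderiv vs f differentiable_on S)"

definition grad :: "('a::euclidean_space \<Rightarrow> real) \<Rightarrow> 'a \<Rightarrow> 'a" where
  "grad f z = (\<Sum>b\<in>Basis. frechet_derivative f (at z) b *\<^sub>R b)"

definition divergence :: "('a::euclidean_space \<Rightarrow> 'a) \<Rightarrow> 'a \<Rightarrow> real" where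
  "divergence F z = (\<Sum>b\<in>Basis. frechet_derivative F (at z) b \<bullet> b)"

text \<open>For a map L, the pullback of the standard volume form
  (the wedge product of all coordinate differentials) is det_lin L times that form.\<close>
definition det_lin :: "('a::euclidean_space \<Rightarrow> 'a) \<Rightarrow> real" where
  "det_lin L = (\<Sum>p | p permutes (Basis::'a set). of_int (sign p) * (\<Prod>b\<in>Basis. L (p b) \<bullet> b))"

text \<open>Phase space of N particles: for each particle I (index type 'n, N = CARD('n)) a pair
  (xbar_I, pbar_I) in R^3 x R^3.  The time-dependent vector field v_H(xbar0, z): for particle I,
  (dtau_I/dxbar0) * (dH_I/dp, - dH_I/dx) evaluated at (xbar_I, pbar_I).\<close>
definition hamiltonian_field ::
  "('n::finite \<Rightarrow> (real ^ 3) \<times> (real ^ 3) \<Rightarrow> real) \<Rightarrow> ('n \<Rightarrow> real \<Rightarrow> real) \<Rightarrow>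
     real \<Rightarrow> ((real ^ 3) \<times> (real ^ 3)) ^ 'n \<Rightarrow> ((real ^ 3) \<times> (real ^ 3)) ^ 'n" where
  "hamiltonian_field H tau t z =
     (\<chi> I. deriv (tau I) t *\<^sub>R (snd (grad (H I) (z $ I)), - fst (grad (H I) (z $ I))))"

end

theory Submission
  imports Defs
begin

text \<open>Particle \<open>I\<close> moves along \<open>d\<tau>\<^sub>I/dx\<^sup>0\<close> times the symplectic gradient
  \<open>(\<partial>H\<^sub>I/\<partial>p, -\<partial>H\<^sub>I/\<partial>x)\<close> of its Hamiltonian.  The divergence of this field is a sum of
  terms \<open>\<partial>\<^sub>x\<^sub>j\<partial>\<^sub>p\<^sub>jH\<^sub>I - \<partial>\<^sub>p\<^sub>j\<partial>\<^sub>x\<^sub>jH\<^sub>I\<close>, which vanish by the symmetry of second derivatives.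
  For the flow \<open>\<phi>\<close>, the spatial derivative \<open>L t = D\<phi>\<^sub>t\<close> satisfies the variational equation
  \<open>L' = DF \<circ> L\<close>, so by Jacobi's formula \<open>(det L)' = div F \<cdot> det L = 0\<close>; since \<open>L t\<^sub>0\<close> is the identity,
  \<open>det L = 1\<close> throughout, i.e. the flow preserves the phase-space volume form.\<close>

lemma smooth_on_has_derivative:
  assumes "smooth_on S f" and "x \<in> S"
  shows "(dderiv vs f has_derivative frechet_derivative (dderiv vs f) (at x)) (at x)"
proof -
  from assms have "dderiv vs f differentiable (at x)"
    by (auto simp: smooth_on_def differentiable_on_eq_differentiable_at)
  then show ?thesis
    by (simp add: frechet_derivative_works)
qed

lemma smooth_on_continuous_on: "smooth_on S f \<Longrightarrow> continuous_on S (dderiv vs f)"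
  by (simp add: smooth_on_def differentiable_imp_continuous_on)

lemma has_derivative_partial_fst:
  assumes "(f has_derivative D) (at (x, y))"
  shows "((\<lambda>x. f (x, y)) has_derivative (\<lambda>h. D (h, 0))) (at x)"
proof -
  have "((\<lambda>x. (x, y)) has_derivative (\<lambda>h. (h, 0))) (at x)"
    by (auto intro!: derivative_eq_intros)
  from has_derivative_compose[OF this assms] show ?thesis
    by (simp add: o_def)
qed

lemma has_derivative_partial_snd:
  assumes "(f has_derivative D) (at (x, y))"
  shows "((\<lambda>y. f (x, y)) has_derivative (\<lambda>k. D (0, k))) (at y)"
proof -
  have "((\<lambda>y. (x, y)) has_derivative (\<lambda>k. (0, k))) (at y)"
    by (auto intro!: derivative_eq_intros)
  from has_derivative_compose[OF this assms] show ?thesis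
    by (simp add: o_def)
qed

lemma has_derivative_along_line:
  assumes "(f has_derivative D) (at (y + r *\<^sub>R u))"
  shows "((\<lambda>r. f (y + r *\<^sub>R u)) has_derivative (\<lambda>h. h *\<^sub>R D u)) (at r within X)"
proof -
  have "((\<lambda>r. y + r *\<^sub>R u) has_derivative (\<lambda>h. h *\<^sub>R u)) (at r within X)"
    by (auto intro!: derivative_eq_intros)
  from has_derivative_compose[OF this has_derivative_at_withinI[OF assms]]
  show ?thesis
    using linear_cmul[OF has_derivative_linear[OF assms]] by (simp add: o_def)
qed

lemma second_difference_mvt:
  fixes f :: "'a::real_normed_vector \<Rightarrow> real"
  assumes s: "s > 0"
    and square: "\<And>a b. a \<in> {0..s} \<Longrightarrow> b \<in> {0..s} \<Longrightarrow> x + a *\<^sub>R v + b *\<^sub>R w \<in> S"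
    and Df: "\<And>y. y \<in> S \<Longrightarrow> (f has_derivative Df y) (at y)"
    and Av: "\<And>y. y \<in> S \<Longrightarrow> ((\<lambda>y. Df y v) has_derivative Av y) (at y)"
  shows "\<exists>a\<in>{0..s}. \<exists>b\<in>{0..s}. f (x + s *\<^sub>R v + s *\<^sub>R w) - f (x + s *\<^sub>R v) - f (x + s *\<^sub>R w) + f x
           = s * s * Av (x + a *\<^sub>R v + b *\<^sub>R w) w"
proof -
  define \<phi> where "\<phi> r = f (x + r *\<^sub>R v + s *\<^sub>R w) - f (x + r *\<^sub>R v)" for r
  have "\<exists>a\<in>{0..s}. \<phi> s - \<phi> 0 = (\<lambda>h. h * (Df (x + a *\<^sub>R v + s *\<^sub>R w) v - Df (x + a *\<^sub>R v) v)) (s - 0)"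
  proof (rule mvt_very_simple)
    fix r assume r: "0 \<le> r" "r \<le> s"
    have shifted: "((\<lambda>r. f ((x + s *\<^sub>R w) + r *\<^sub>R v)) has_derivative (\<lambda>h. h *\<^sub>R Df (x + r *\<^sub>R v + s *\<^sub>R w) v))
        (at r within {0..s})"
      by (rule has_derivative_along_line) (use Df square r s in \<open>auto simp: algebra_simps\<close>)
    have base: "((\<lambda>r. f (x + r *\<^sub>R v)) has_derivative (\<lambda>h. h *\<^sub>R Df (x + r *\<^sub>R v) v)) (at r within {0..s})"
      by (rule has_derivative_along_line) (use Df square[of r 0] r s in auto)
    show "(\<phi> has_derivative (\<lambda>h. h * (Df (x + r *\<^sub>R v + s *\<^sub>R w) v - Df (x + r *\<^sub>R v) v)))
        (at r within {0..s})"
      unfolding \<phi>_def using has_derivative_diff[OF shifted base] by (simp add: algebra_simps)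
  qed (use s in auto)
  then obtain a where a: "a \<in> {0..s}"
    and diff_v: "\<phi> s - \<phi> 0 = s * (Df (x + a *\<^sub>R v + s *\<^sub>R w) v - Df (x + a *\<^sub>R v) v)"
    by auto
  have "\<exists>b\<in>{0..s}. Df (x + a *\<^sub>R v + s *\<^sub>R w) v - Df (x + a *\<^sub>R v + 0 *\<^sub>R w) v
        = (\<lambda>h. h * Av (x + a *\<^sub>R v + b *\<^sub>R w) w) (s - 0)"
  proof (rule mvt_very_simple[where f="\<lambda>q. Df (x + a *\<^sub>R v + q *\<^sub>R w) v"])
    fix q assume "0 \<le> q" "q \<le> s"
    then show "((\<lambda>q. Df (x + a *\<^sub>R v + q *\<^sub>R w) v) has_derivative (\<lambda>h. h * Av (x + a *\<^sub>R v + q *\<^sub>R w) w))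
        (at q within {0..s})"
      using has_derivative_along_line[of "\<lambda>y. Df y v" "Av (x + a *\<^sub>R v + q *\<^sub>R w)" "x + a *\<^sub>R v" q w "{0..s}"]
        Av square a by auto
  qed (use s in auto)
  then obtain b where b: "b \<in> {0..s}"
    and diff_w: "Df (x + a *\<^sub>R v + s *\<^sub>R w) v - Df (x + a *\<^sub>R v) v = s * Av (x + a *\<^sub>R v + b *\<^sub>R w) w"
    by auto
  show ?thesis
    using diff_v diff_w a b unfolding \<phi>_def by (intro bexI[of _ a] bexI[of _ b]) (auto simp: algebra_simps)
qed

lemma norm_small_combination_less:
  assumes "e > 0" and "a \<in> {0..e / (norm v + norm w + 1)}" and "b \<in> {0..e / (norm v + norm w + 1)}"
  shows "norm (a *\<^sub>R v + b *\<^sub>R w) < e"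
proof -
  define s where "s = e / (norm v + norm w + 1)"
  have pos: "norm v + norm w + 1 > 0"
    by (simp add: add_nonneg_pos)
  have "norm (a *\<^sub>R v + b *\<^sub>R w) \<le> a * norm v + b * norm w"
    using assms(2,3) by (metis abs_of_nonneg atLeastAtMost_iff norm_scaleR norm_triangle_ineq)
  also have "\<dots> \<le> s * norm v + s * norm w"
    using assms(2,3) by (intro add_mono mult_right_mono) (auto simp: s_def)
  also have "\<dots> < s * (norm v + norm w + 1)"
    using assms(1) pos by (simp add: s_def distrib_left)
  also have "\<dots> = e"
    using pos by (simp add: s_def)
  finally show ?thesis .
qed

lemma mixed_partials_meet_in_square:
  fixes f :: "'a::real_normed_vector \<Rightarrow> real"
  assumes s: "s > 0"
    and square: "\<And>a b. a \<in> {0..s} \<Longrightarrow> b \<in> {0..s} \<Longrightarrow> x + a *\<^sub>R v + b *\<^sub>R w \<in> S"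
    and Df: "\<And>y. y \<in> S \<Longrightarrow> (f has_derivative Df y) (at y)"
    and Av: "\<And>y. y \<in> S \<Longrightarrow> ((\<lambda>y. Df y v) has_derivative Av y) (at y)"
    and Aw: "\<And>y. y \<in> S \<Longrightarrow> ((\<lambda>y. Df y w) has_derivative Aw y) (at y)"
  shows "\<exists>a\<in>{0..s}. \<exists>b\<in>{0..s}. \<exists>a'\<in>{0..s}. \<exists>b'\<in>{0..s}.
           Av (x + a *\<^sub>R v + b *\<^sub>R w) w = Aw (x + a' *\<^sub>R v + b' *\<^sub>R w) v"
proof -
  have swap: "x + a *\<^sub>R w + b *\<^sub>R v = x + b *\<^sub>R v + a *\<^sub>R w" for a b
    by (simp add: algebra_simps)
  have square_wv: "x + a *\<^sub>R w + b *\<^sub>R v \<in> S" if "a \<in> {0..s}" "b \<in> {0..s}" for a b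
    using square[OF that(2,1)] unfolding swap .
  obtain a b where ab: "a \<in> {0..s}" "b \<in> {0..s}" and second_v:
    "f (x + s *\<^sub>R v + s *\<^sub>R w) - f (x + s *\<^sub>R v) - f (x + s *\<^sub>R w) + f x = s * s * Av (x + a *\<^sub>R v + b *\<^sub>R w) w"
    using second_difference_mvt[OF s square Df Av] by blast
  obtain a' b' where ab': "a' \<in> {0..s}" "b' \<in> {0..s}" and second_w:
    "f (x + s *\<^sub>R w + s *\<^sub>R v) - f (x + s *\<^sub>R w) - f (x + s *\<^sub>R v) + f x = s * s * Aw (x + a' *\<^sub>R w + b' *\<^sub>R v) v"
    using second_difference_mvt[OF s square_wv Df Aw] by blast
  have "s * s * Av (x + a *\<^sub>R v + b *\<^sub>R w) w = s * s * Aw (x + b' *\<^sub>R v + a' *\<^sub>R w) v"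
    using second_v second_w unfolding swap by linarith
  with s have "Av (x + a *\<^sub>R v + b *\<^sub>R w) w = Aw (x + b' *\<^sub>R v + a' *\<^sub>R w) v"
    by simp
  with ab ab' show ?thesis
    by blast
qed

text \<open>Continuity of the mixed partials at \<open>x\<close> forces the two values produced in shrinking squares
  to agree in the limit.\<close>

lemma mixed_partials_commute:
  fixes f :: "'a::real_normed_vector \<Rightarrow> real"
  assumes S: "open S" "x \<in> S"
    and Df: "\<And>y. y \<in> S \<Longrightarrow> (f has_derivative Df y) (at y)"
    and Av: "\<And>y. y \<in> S \<Longrightarrow> ((\<lambda>y. Df y v) has_derivative Av y) (at y)"
    and Aw: "\<And>y. y \<in> S \<Longrightarrow> ((\<lambda>y. Df y w) has_derivative Aw y) (at y)"
    and cont_v: "continuous_on S (\<lambda>y. Av y w)" and cont_w: "continuous_on S (\<lambda>y. Aw y v)"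
  shows "Av x w = Aw x v"
proof (rule ccontr)
  assume "Av x w \<noteq> Aw x v"
  define d where "d = \<bar>Av x w - Aw x v\<bar> / 2"
  have d: "d > 0"
    using \<open>Av x w \<noteq> Aw x v\<close> by (simp add: d_def)
  obtain e0 where e0: "e0 > 0" "ball x e0 \<subseteq> S"
    using S open_contains_ball by blast
  obtain e1 where e1: "e1 > 0" "\<And>y. y \<in> S \<Longrightarrow> dist y x < e1 \<Longrightarrow> dist (Av y w) (Av x w) < d"
    using cont_v S d unfolding continuous_on_eq_continuous_within continuous_within_eps_delta by metis
  obtain e2 where e2: "e2 > 0" "\<And>y. y \<in> S \<Longrightarrow> dist y x < e2 \<Longrightarrow> dist (Aw y v) (Aw x v) < d"
    using cont_w S d unfolding continuous_on_eq_continuous_within continuous_within_eps_delta by metis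
  define e where "e = min e0 (min e1 e2)"
  define s where "s = e / (norm v + norm w + 1)"
  have e: "e > 0"
    using e0 e1 e2 by (simp add: e_def)
  then have s: "s > 0"
    by (simp add: s_def add_nonneg_pos)
  have near: "dist (x + a *\<^sub>R v + b *\<^sub>R w) x < e" if "a \<in> {0..s}" "b \<in> {0..s}" for a b
  proof -
    have "norm (a *\<^sub>R v + b *\<^sub>R w) < e"
      using norm_small_combination_less[OF e] that unfolding s_def by blast
    then show ?thesis
      by (simp add: dist_norm add.assoc)
  qed
  have in_S: "x + a *\<^sub>R v + b *\<^sub>R w \<in> S" if "a \<in> {0..s}" "b \<in> {0..s}" for a b
    using near[OF that] e0 unfolding e_def by (auto simp: dist_commute subset_iff)
  obtain a b a' b' where ab: "a \<in> {0..s}" "b \<in> {0..s}" "a' \<in> {0..s}" "b' \<in> {0..s}"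
    and eq: "Av (x + a *\<^sub>R v + b *\<^sub>R w) w = Aw (x + a' *\<^sub>R v + b' *\<^sub>R w) v"
    using mixed_partials_meet_in_square[OF s in_S Df Av Aw] by blast
  have "dist (Av (x + a *\<^sub>R v + b *\<^sub>R w) w) (Av x w) < d"
    using e1(2)[OF in_S[OF ab(1,2)] ] near[OF ab(1,2)] unfolding e_def by simp
  moreover have "dist (Aw (x + a' *\<^sub>R v + b' *\<^sub>R w) v) (Aw x v) < d"
    using e2(2)[OF in_S[OF ab(3,4)] ] near[OF ab(3,4)] unfolding e_def by simp
  moreover have "\<And>p q a0 b0 :: real. \<bar>p - a0\<bar> < \<bar>a0 - b0\<bar> / 2 \<Longrightarrow> \<bar>q - b0\<bar> < \<bar>a0 - b0\<bar> / 2 \<Longrightarrow> p = q \<Longrightarrow> False"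
    by (simp add: abs_if split: if_split_asm)
  ultimately show False
    using eq unfolding d_def dist_real_def by blast
qed

lemma dderiv_swap:
  fixes f :: "'a::real_normed_vector \<Rightarrow> 'b::real_inner"
  assumes f: "smooth_on S f" and x: "x \<in> S"
  shows "dderiv [w, v] f x = dderiv [v, w] f x"
proof -
  have S: "open S"
    using f by (simp add: smooth_on_def)
  have "dderiv [w, v] f x \<bullet> b = dderiv [v, w] f x \<bullet> b" for b
  proof -
    have inner_right: "((\<lambda>y. g y \<bullet> b) has_derivative (\<lambda>h. G h \<bullet> b)) (at y)"
      if "(g has_derivative G) (at y)" for g :: "'a \<Rightarrow> 'b" and G y
      using bounded_linear.has_derivative[OF bounded_linear_inner_left that] .
    have "frechet_derivative (dderiv [v] f) (at x) w \<bullet> b = frechet_derivative (dderiv [w] f) (at x) v \<bullet> b"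
    proof (rule mixed_partials_commute[OF S x, where f="\<lambda>y. f y \<bullet> b"
          and Df="\<lambda>y h. frechet_derivative f (at y) h \<bullet> b"])
      fix y assume y: "y \<in> S"
      show "((\<lambda>y. f y \<bullet> b) has_derivative (\<lambda>h. frechet_derivative f (at y) h \<bullet> b)) (at y)"
        using inner_right[OF smooth_on_has_derivative[OF f y, of "[]"]] by simp
      show "((\<lambda>y. frechet_derivative f (at y) v \<bullet> b) has_derivative
          (\<lambda>h. frechet_derivative (dderiv [v] f) (at y) h \<bullet> b)) (at y)"
        using inner_right[OF smooth_on_has_derivative[OF f y, of "[v]"]] by simp
      show "((\<lambda>y. frechet_derivative f (at y) w \<bullet> b) has_derivative
          (\<lambda>h. frechet_derivative (dderiv [w] f) (at y) h \<bullet> b)) (at y)"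
        using inner_right[OF smooth_on_has_derivative[OF f y, of "[w]"]] by simp
    next
      show "continuous_on S (\<lambda>y. frechet_derivative (dderiv [v] f) (at y) w \<bullet> b)"
        using continuous_on_inner[OF smooth_on_continuous_on[OF f, of "[w, v]"] continuous_on_const] by simp
      show "continuous_on S (\<lambda>y. frechet_derivative (dderiv [w] f) (at y) v \<bullet> b)"
        using continuous_on_inner[OF smooth_on_continuous_on[OF f, of "[v, w]"] continuous_on_const] by simp
    qed
    then show ?thesis
      by simp
  qed
  then have "(dderiv [w, v] f x - dderiv [v, w] f x) \<bullet> (dderiv [w, v] f x - dderiv [v, w] f x) = 0"
    by (simp add: inner_diff_left)
  then show ?thesis
    by simp
qed

lemma sum_Basis_prod:
  fixes g :: "'a::euclidean_space \<times> 'b::euclidean_space \<Rightarrow> 'c::comm_monoid_add"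
  shows "sum g Basis = (\<Sum>i\<in>Basis. g (i, 0)) + (\<Sum>i\<in>Basis. g (0, i))"
proof -
  have "inj_on (\<lambda>u. (u::'a, 0::'b)) Basis" "inj_on (\<lambda>u. (0::'a, u::'b)) Basis"
    by (auto intro!: inj_onI)
  then show ?thesis
    unfolding Basis_prod_def by (subst sum.union_disjoint) (auto simp: sum.reindex)
qed

lemma sum_Basis_vec:
  fixes g :: "'a::euclidean_space ^ 'n::finite \<Rightarrow> 'c::comm_monoid_add"
  shows "sum g Basis = (\<Sum>I\<in>UNIV. \<Sum>u\<in>Basis. g (axis I u))"
proof -
  have Basis: "(Basis :: ('a^'n) set) = (\<lambda>(I, u). axis I u) ` (UNIV \<times> Basis)"
    unfolding Basis_vec_def by auto
  have "inj_on (\<lambda>(I, u). axis I u :: 'a^'n) (UNIV \<times> Basis)"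
    by (auto intro!: inj_onI simp: axis_eq_axis nonzero_Basis)
  show ?thesis
    unfolding Basis sum.reindex[OF \<open>inj_on _ _\<close>] by (simp add: sum.cartesian_product prod.case_distrib)
qed

lemma has_derivative_vec_componentwise:
  fixes f :: "'a::real_normed_vector \<Rightarrow> 'b::euclidean_space ^ 'n::finite"
  assumes "\<And>I. ((\<lambda>x. f x $ I) has_derivative (\<lambda>k. f' k $ I)) (at z)"
  shows "(f has_derivative f') (at z)"
proof (subst has_derivative_componentwise_within, intro ballI)
  fix i :: "'b^'n" assume "i \<in> Basis"
  then obtain I u where i: "i = axis I u" unfolding Basis_vec_def by auto
  show "((\<lambda>x. f x \<bullet> i) has_derivative (\<lambda>x. f' x \<bullet> i)) (at z)"
    unfolding i inner_axis using bounded_linear.has_derivative[OF bounded_linear_inner_left assms] .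
qed

lemma has_derivative_blockwise:
  fixes f :: "'n::finite \<Rightarrow> 'a::euclidean_space \<Rightarrow> 'a"
  assumes "\<And>I. (f I has_derivative f' I) (at (z $ I))"
  shows "((\<lambda>z. \<chi> I. f I (z $ I)) has_derivative (\<lambda>k. \<chi> I. f' I (k $ I))) (at z)"
proof (rule has_derivative_vec_componentwise)
  fix J
  have "((\<lambda>z. z $ J) has_derivative (\<lambda>k. k $ J)) (at z)"
    by (simp add: bounded_linear_imp_has_derivative bounded_linear_vec_nth)
  from has_derivative_compose[OF this assms[of J]]
  show "((\<lambda>z. (\<chi> I. f I (z $ I)) $ J) has_derivative (\<lambda>k. (\<chi> I. f' I (k $ I)) $ J)) (at z)"
    by (simp add: o_def)
qed

lemma divergence_blockwise:
  fixes f :: "'n::finite \<Rightarrow> 'a::euclidean_space \<Rightarrow> 'a"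
  assumes "\<And>I. f I differentiable (at (z $ I))"
  shows "divergence (\<lambda>z. \<chi> I. f I (z $ I)) z = (\<Sum>I\<in>UNIV. divergence (f I) (z $ I))"
proof -
  have "\<And>I. (f I has_derivative frechet_derivative (f I) (at (z $ I))) (at (z $ I))"
    using assms frechet_derivative_works by blast
  from frechet_derivative_at[OF has_derivative_blockwise[OF this], symmetric]
  show ?thesis
    unfolding divergence_def sum_Basis_vec by (simp add: inner_axis)
qed

lemma divergence_scaleR:
  assumes "f differentiable (at z)"
  shows "divergence (\<lambda>w. c *\<^sub>R f w) z = c * divergence f z"
proof -
  have "(f has_derivative frechet_derivative f (at z)) (at z)"
    using assms frechet_derivative_works by blast
  from frechet_derivative_at[OF has_derivative_scaleR_right[OF this, of c], symmetric]
  show ?thesis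
    unfolding divergence_def by (simp add: sum_distrib_left)
qed

lemma grad_has_derivative:
  fixes h :: "'a::euclidean_space \<Rightarrow> real"
  assumes "smooth_on S h" and "w \<in> S"
  shows "(grad h has_derivative (\<lambda>u. \<Sum>e\<in>Basis. dderiv [u, e] h w *\<^sub>R e)) (at w)"
proof -
  have "grad h = (\<lambda>y. \<Sum>e\<in>Basis. dderiv [e] h y *\<^sub>R e)"
    by (simp add: grad_def fun_eq_iff)
  moreover have "((\<lambda>y. \<Sum>e\<in>Basis. dderiv [e] h y *\<^sub>R e) has_derivative
      (\<lambda>u. \<Sum>e\<in>Basis. frechet_derivative (dderiv [e] h) (at w) u *\<^sub>R e)) (at w)"
    by (intro has_derivative_sum has_derivative_scaleR_left smooth_on_has_derivative[OF assms])
  ultimately show ?thesis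
    by simp
qed

definition symplectic_grad :: "('a::euclidean_space \<times> 'a \<Rightarrow> real) \<Rightarrow> 'a \<times> 'a \<Rightarrow> 'a \<times> 'a" where
  "symplectic_grad h w = (snd (grad h w), - fst (grad h w))"

lemma symplectic_grad_has_derivative:
  fixes h :: "'a::euclidean_space \<times> 'a \<Rightarrow> real"
  assumes "smooth_on S h" and "w \<in> S"
  shows "(symplectic_grad h has_derivative
      (\<lambda>u. (snd (\<Sum>e\<in>Basis. dderiv [u, e] h w *\<^sub>R e), - fst (\<Sum>e\<in>Basis. dderiv [u, e] h w *\<^sub>R e)))) (at w)"
  unfolding symplectic_grad_def[abs_def]
  by (intro has_derivative_Pair has_derivative_minus has_derivative_snd has_derivative_fst
      grad_has_derivative[OF assms])

lemma divergence_symplectic_grad: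
  fixes h :: "'a::euclidean_space \<times> 'a \<Rightarrow> real"
  assumes h: "smooth_on S h" and w: "w \<in> S"
  shows "divergence (symplectic_grad h) w = 0"
proof -
  define G where "G u = (\<Sum>e\<in>Basis. dderiv [u, e] h w *\<^sub>R e)" for u
  from symplectic_grad_has_derivative[OF h w]
  have "(symplectic_grad h has_derivative (\<lambda>u. (snd (G u), - fst (G u)))) (at w)"
    by (simp add: G_def)
  then have div: "divergence (symplectic_grad h) w = (\<Sum>u\<in>Basis. (snd (G u), - fst (G u)) \<bullet> u)"
    unfolding divergence_def by (simp add: frechet_derivative_at[symmetric])
  have G_coord: "G u \<bullet> e = dderiv [u, e] h w" if "e \<in> Basis" for u e
    using that by (simp add: G_def inner_sum_left inner_Basis if_distrib cong: if_cong)
  have "(snd (G (b, 0)), - fst (G (b, 0))) \<bullet> (b, 0) = dderiv [(b, 0), (0, b)] h w"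
    if "b \<in> Basis" for b
    using G_coord[of "(0, b)"] that by (simp add: inner_Pair_0 Basis_prod_def)
  moreover have "(snd (G (0, b)), - fst (G (0, b))) \<bullet> (0, b) = - dderiv [(0, b), (b, 0)] h w"
    if "b \<in> Basis" for b
    using G_coord[of "(b, 0)"] that by (simp add: inner_Pair_0 Basis_prod_def)
  moreover have "dderiv [(0, b), (b, 0)] h w = dderiv [(b, 0), (0, b)] h w" for b
    by (rule dderiv_swap[OF h w])
  ultimately show ?thesis
    unfolding div sum_Basis_prod by (simp add: sum.distrib[symmetric])
qed

lemma hamiltonian_field_eq_symplectic_grad:
  "hamiltonian_field H tau t z = (\<chi> I. deriv (tau I) t *\<^sub>R symplectic_grad (H I) (z $ I))"
  by (simp add: hamiltonian_field_def symplectic_grad_def)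

lemma hamiltonian_field_differentiable_divergence_zero:
  assumes "\<And>I. smooth_on UNIV (H I)"
  shows "hamiltonian_field H tau t differentiable (at z)"
    and "divergence (hamiltonian_field H tau t) z = 0"
proof -
  define F where "F I w = deriv (tau I) t *\<^sub>R symplectic_grad (H I) w" for I w
  have field: "hamiltonian_field H tau t = (\<lambda>z. \<chi> I. F I (z $ I))"
    by (simp add: fun_eq_iff hamiltonian_field_eq_symplectic_grad F_def)
  have D: "symplectic_grad (H I) differentiable (at w)" for I w
    using differentiableI[OF symplectic_grad_has_derivative[OF assms]] by blast
  then have F_diff: "F I differentiable (at w)" for I w
    unfolding F_def[abs_def] by (intro differentiable_scaleR differentiable_const)
  then have "(F I has_derivative frechet_derivative (F I) (at (z $ I))) (at (z $ I))" for I
    using frechet_derivative_works by blast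
  from differentiableI[OF has_derivative_blockwise[OF this]]
  show "hamiltonian_field H tau t differentiable (at z)"
    unfolding field .
  have "divergence (F I) w = 0" for I w
    unfolding F_def[abs_def] divergence_scaleR[OF D] divergence_symplectic_grad[OF assms UNIV_I] by simp
  then show "divergence (hamiltonian_field H tau t) z = 0"
    unfolding field divergence_blockwise[OF F_diff] by simp
qed

definition trace_lin :: "('a::euclidean_space \<Rightarrow> 'a) \<Rightarrow> real" where
  "trace_lin M = (\<Sum>c\<in>Basis. M c \<bullet> c)"

lemma divergence_eq_trace_lin: "divergence F z = trace_lin (frechet_derivative F (at z))"
  by (simp add: divergence_def trace_lin_def)

lemma det_lin_id: "det_lin (\<lambda>x::'a::euclidean_space. x) = 1"
proof -
  define P where "P = {p. p permutes (Basis::'a set)}"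
  have "of_int (sign p) * (\<Prod>b\<in>Basis. p b \<bullet> b) = (0::real)" if "p \<in> P - {id}" for p
  proof -
    from that have p: "p permutes Basis" "p \<noteq> id"
      by (auto simp: P_def)
    then obtain b where b: "p b \<noteq> b"
      by (metis eq_id_iff)
    then have b_Basis: "b \<in> Basis"
      using p(1) by (meson permutes_not_in)
    then have "p b \<in> Basis"
      using p(1) by (simp add: permutes_in_image)
    then have "p b \<bullet> b = 0"
      using b_Basis b inner_not_same_Basis by blast
    then have "(\<Prod>b\<in>Basis. p b \<bullet> b) = 0"
      using b_Basis by (intro prod_zero) auto
    then show ?thesis
      by simp
  qed
  then have "(\<Sum>p\<in>P - {id}. of_int (sign p) * (\<Prod>b\<in>Basis. p b \<bullet> b)) = (0::real)"
    by (intro sum.neutral) blast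
  moreover have "finite P" "id \<in> P"
    by (simp_all add: P_def finite_permutations permutes_id)
  ultimately show ?thesis
    unfolding det_lin_def P_def[symmetric]
    using sum.remove[of P id "\<lambda>p. of_int (sign p) * (\<Prod>b\<in>Basis. p b \<bullet> (b::'a))"] by simp
qed

text \<open>The sum below is the Leibniz expansion of the matrix \<open>(L i \<bullet> j)\<close> with column \<open>c\<close> replaced
  by column \<open>d\<close>; for \<open>c \<noteq> d\<close> composing with the transposition of \<open>c\<close> and \<open>d\<close> flips its sign.\<close>

lemma det_lin_replace_column:
  fixes L :: "'a::euclidean_space \<Rightarrow> 'a"
  assumes c: "c \<in> Basis" and d: "d \<in> Basis"
  shows "(\<Sum>p | p permutes (Basis::'a set). of_int (sign p) *
            (\<Prod>b\<in>Basis. L (p b) \<bullet> (if b = c then d else b))) = (if c = d then det_lin L else 0)"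
proof (cases "c = d")
  case True
  then show ?thesis
    by (simp add: det_lin_def)
next
  case cd: False
  define P where "P = {p. p permutes (Basis::'a set)}"
  define \<tau> where "\<tau> = Transposition.transpose c d"
  define \<sigma> where "\<sigma> b = (if b = c then d else b)" for b
  define g where "g p = of_int (sign p) * (\<Prod>b\<in>Basis. L (p b) \<bullet> \<sigma> b)" for p
  have \<tau>: "\<tau> permutes Basis"
    unfolding \<tau>_def using c d by (rule permutes_swap_id)
  have \<sigma>\<tau>: "\<sigma> (\<tau> b) = \<sigma> b" for b
    using cd by (auto simp: \<sigma>_def \<tau>_def Transposition.transpose_def)
  have g_swap: "g (p \<circ> \<tau>) = - g p" if "p \<in> P" for p
  proof -
    have "permutation p" "permutation \<tau>"
      using that \<tau> by (auto simp: P_def intro: permutes_imp_permutation[OF finite_Basis])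
    then have "sign (p \<circ> \<tau>) = - sign p"
      using cd by (simp add: sign_compose \<tau>_def sign_swap_id)
    moreover have "(\<Prod>b\<in>Basis. L ((p \<circ> \<tau>) b) \<bullet> \<sigma> b) = (\<Prod>b\<in>Basis. L (p b) \<bullet> \<sigma> b)"
      using prod.permute[OF \<tau>, of "\<lambda>x. L (p x) \<bullet> \<sigma> x"] \<sigma>\<tau> by (simp add: o_def)
    ultimately show ?thesis
      unfolding g_def by simp
  qed
  have "(\<lambda>p. p \<circ> \<tau>) ` P \<subseteq> P"
    using \<tau> by (auto simp: P_def intro: permutes_compose)
  then have "bij_betw (\<lambda>p. p \<circ> \<tau>) P P"
    by (intro bij_betw_byWitness[where f'="\<lambda>p. p \<circ> \<tau>"]) (simp_all add: \<tau>_def o_assoc[symmetric])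
  then have "sum g P = sum (\<lambda>p. g (p \<circ> \<tau>)) P"
    using sum.reindex_bij_betw[of "\<lambda>p. p \<circ> \<tau>" P P g] by simp
  also have "\<dots> = - sum g P"
    using g_swap by (simp add: sum_negf[symmetric])
  finally show ?thesis
    using cd unfolding g_def P_def \<sigma>_def by simp
qed

lemma linear_inner_times_prod_expand:
  fixes M u :: "'a::euclidean_space \<Rightarrow> 'a"
  assumes M: "linear M" and c: "c \<in> Basis"
  shows "(M (u c) \<bullet> c) * (\<Prod>b\<in>Basis-{c}. u b \<bullet> b)
       = (\<Sum>d\<in>Basis. (M d \<bullet> c) * (\<Prod>b\<in>Basis. u b \<bullet> (if b = c then d else b)))"
proof -
  define Q where "Q = (\<Prod>b\<in>Basis-{c}. u b \<bullet> b)"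
  have "M (u c) = M (\<Sum>d\<in>Basis. (u c \<bullet> d) *\<^sub>R d)"
    by (simp add: euclidean_representation)
  also have "\<dots> = (\<Sum>d\<in>Basis. (u c \<bullet> d) *\<^sub>R M d)"
    by (simp add: linear_sum[OF M] linear_cmul[OF M])
  finally have "M (u c) \<bullet> c = (\<Sum>d\<in>Basis. (M d \<bullet> c) * (u c \<bullet> d))"
    by (simp add: inner_sum_left mult.commute)
  moreover have "(\<Prod>b\<in>Basis. u b \<bullet> (if b = c then d else b)) = (u c \<bullet> d) * Q" for d
  proof -
    have "(\<Prod>b\<in>Basis-{c}. u b \<bullet> (if b = c then d else b)) = Q"
      unfolding Q_def by (rule prod.cong) auto
    then show ?thesis
      by (subst prod.remove[OF finite_Basis c]) simp
  qed
  ultimately show ?thesis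
    unfolding Q_def[symmetric] by (simp add: sum_distrib_right mult.assoc)
qed

lemma trace_lin_mult_det_lin:
  fixes L M :: "'a::euclidean_space \<Rightarrow> 'a"
  assumes M: "linear M"
  shows "(\<Sum>p | p permutes (Basis::'a set). of_int (sign p) *
            (\<Sum>c\<in>Basis. (M (L (p c)) \<bullet> c) * (\<Prod>b\<in>Basis-{c}. L (p b) \<bullet> b)))
       = trace_lin M * det_lin L"
proof -
  define P where "P = {p. p permutes (Basis::'a set)}"
  define R where "R p c d = (\<Prod>b\<in>Basis. L (p b) \<bullet> (if b = c then d else b))" for p and c d :: 'a
  have expand_term: "(M (L (p c)) \<bullet> c) * (\<Prod>b\<in>Basis-{c}. L (p b) \<bullet> b) = (\<Sum>d\<in>Basis. (M d \<bullet> c) * R p c d)"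
    if "c \<in> Basis" for p c
    unfolding R_def by (rule linear_inner_times_prod_expand[OF M that])
  have "(\<Sum>p\<in>P. of_int (sign p) * (\<Sum>c\<in>Basis. (M (L (p c)) \<bullet> c) * (\<Prod>b\<in>Basis-{c}. L (p b) \<bullet> b)))
      = (\<Sum>p\<in>P. \<Sum>c\<in>Basis. \<Sum>d\<in>Basis. (M d \<bullet> c) * (of_int (sign p) * R p c d))"
  proof (rule sum.cong[OF refl])
    fix p
    have "of_int (sign p) * (\<Sum>c\<in>Basis. (M (L (p c)) \<bullet> c) * (\<Prod>b\<in>Basis-{c}. L (p b) \<bullet> b))
        = of_int (sign p) * (\<Sum>c\<in>Basis. \<Sum>d\<in>Basis. (M d \<bullet> c) * R p c d)"
      by (simp add: expand_term)
    then show "of_int (sign p) * (\<Sum>c\<in>Basis. (M (L (p c)) \<bullet> c) * (\<Prod>b\<in>Basis-{c}. L (p b) \<bullet> b))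
        = (\<Sum>c\<in>Basis. \<Sum>d\<in>Basis. (M d \<bullet> c) * (of_int (sign p) * R p c d))"
      by (simp add: sum_distrib_left mult.left_commute)
  qed
  also have "\<dots> = (\<Sum>c\<in>Basis. \<Sum>d\<in>Basis. (M d \<bullet> c) * (\<Sum>p\<in>P. of_int (sign p) * R p c d))"
    unfolding sum_distrib_left by (subst sum.swap) (simp add: sum.swap[of _ P])
  also have "\<dots> = (\<Sum>c\<in>Basis. (M c \<bullet> c) * det_lin L)"
  proof (rule sum.cong[OF refl])
    fix c :: 'a assume c: "c \<in> Basis"
    have "(\<Sum>d\<in>Basis. (M d \<bullet> c) * (\<Sum>p\<in>P. of_int (sign p) * R p c d))
        = (\<Sum>d\<in>Basis. (M d \<bullet> c) * (if c = d then det_lin L else 0))"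
      unfolding P_def R_def by (intro sum.cong refl) (simp add: det_lin_replace_column c)
    also have "\<dots> = (M c \<bullet> c) * det_lin L"
      using c by (simp add: if_distrib sum.delta cong: if_cong)
    finally show "(\<Sum>d\<in>Basis. (M d \<bullet> c) * (\<Sum>p\<in>P. of_int (sign p) * R p c d)) = (M c \<bullet> c) * det_lin L" .
  qed
  also have "\<dots> = trace_lin M * det_lin L"
    by (simp add: trace_lin_def sum_distrib_right)
  finally show ?thesis
    by (simp add: P_def)
qed

lemma has_derivative_det_lin:
  fixes L :: "real \<Rightarrow> 'a::euclidean_space \<Rightarrow> 'a"
  assumes M: "linear M"
    and L': "\<And>a b. ((\<lambda>s. L s a \<bullet> b) has_derivative (\<lambda>h. h * (M (L t a) \<bullet> b))) (at t within X)"
  shows "((\<lambda>s. det_lin (L s)) has_derivative (\<lambda>h. h * (trace_lin M * det_lin (L t)))) (at t within X)"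
proof -
  have "((\<lambda>s. det_lin (L s)) has_derivative
     (\<lambda>h. \<Sum>p | p permutes (Basis::'a set). of_int (sign p) *
            (\<Sum>c\<in>Basis. h * (M (L t (p c)) \<bullet> c) * (\<Prod>b\<in>Basis-{c}. L t (p b) \<bullet> b)))) (at t within X)"
    unfolding det_lin_def by (intro has_derivative_sum has_derivative_mult_right has_derivative_prod L')
  moreover have "(\<Sum>p | p permutes (Basis::'a set). of_int (sign p) *
            (\<Sum>c\<in>Basis. h * (M (L t (p c)) \<bullet> c) * (\<Prod>b\<in>Basis-{c}. L t (p b) \<bullet> b)))
      = h * (trace_lin M * det_lin (L t))" for h
    unfolding trace_lin_mult_det_lin[OF M, symmetric] by (simp add: sum_distrib_left mult_ac)
  ultimately show ?thesis
    by simp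
qed

lemma smooth_flow_space_derivative:
  assumes \<phi>: "smooth_on (T \<times> W) (\<lambda>(t, z). \<phi> t z)" and "s \<in> T" "y \<in> W"
  shows "(\<phi> s has_derivative (\<lambda>a. dderiv [(0, a)] (\<lambda>(t, z). \<phi> t z) (s, y))) (at y)"
  using has_derivative_partial_snd[OF smooth_on_has_derivative[OF \<phi>, of "(s, y)" "[]"]] assms(2,3)
  by simp

lemma smooth_flow_time_derivative:
  assumes \<phi>: "smooth_on (T \<times> W) (\<lambda>(t, z). \<phi> t z)" and s: "s \<in> T" and y: "y \<in> W"
    and flow: "((\<lambda>s. \<phi> s y) has_vector_derivative F s (\<phi> s y)) (at s)"
  shows "dderiv [(1, 0)] (\<lambda>(t, z). \<phi> t z) (s, y) = F s (\<phi> s y)"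
proof -
  have "((\<lambda>s. \<phi> s y) has_derivative (\<lambda>h. frechet_derivative (\<lambda>(t, z). \<phi> t z) (at (s, y)) (h, 0))) (at s)"
    using has_derivative_partial_fst[OF smooth_on_has_derivative[OF \<phi>, of "(s, y)" "[]"]] s y by simp
  moreover have "((\<lambda>s. \<phi> s y) has_derivative (\<lambda>h. h *\<^sub>R F s (\<phi> s y))) (at s)"
    using flow by (simp add: has_vector_derivative_def)
  ultimately have "frechet_derivative (\<lambda>(t, z). \<phi> t z) (at (s, y)) (1, 0) = F s (\<phi> s y)"
    by (metis has_derivative_unique scaleR_one)
  then show ?thesis
    by simp
qed

lemma smooth_flow_mixed_derivative:
  fixes \<phi> F :: "real \<Rightarrow> 'a::euclidean_space \<Rightarrow> 'a"
  assumes F: "F s differentiable (at (\<phi> s z))" and W: "open W"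
    and \<phi>: "smooth_on (T \<times> W) (\<lambda>(t, z). \<phi> t z)"
    and flow: "\<And>y. y \<in> W \<Longrightarrow> ((\<lambda>s. \<phi> s y) has_vector_derivative F s (\<phi> s y)) (at s)"
    and s: "s \<in> T" and z: "z \<in> W"
  shows "dderiv [(0, a), (1, 0)] (\<lambda>(t, z). \<phi> t z) (s, z)
      = frechet_derivative (F s) (at (\<phi> s z)) (dderiv [(0, a)] (\<lambda>(t, z). \<phi> t z) (s, z))"
proof -
  define \<Phi> where "\<Phi> = (\<lambda>(t, z). \<phi> t z)"
  have "((\<lambda>y. dderiv [(1, 0)] \<Phi> (s, y)) has_derivative (\<lambda>a. dderiv [(0, a), (1, 0)] \<Phi> (s, z))) (at z)"
    using has_derivative_partial_snd[OF smooth_on_has_derivative[OF \<phi>, of "(s, z)" "[(1, 0)]"]] s z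
    by (simp add: \<Phi>_def)
  moreover have "dderiv [(1, 0)] \<Phi> (s, y) = F s (\<phi> s y)" if "y \<in> W" for y
    unfolding \<Phi>_def by (rule smooth_flow_time_derivative[where F=F, OF \<phi> s that flow[OF that]])
  ultimately have "((\<lambda>y. F s (\<phi> s y)) has_derivative (\<lambda>a. dderiv [(0, a), (1, 0)] \<Phi> (s, z))) (at z)"
    by (rule has_derivative_transform_within_open[OF _ W z])
  moreover have "(F s has_derivative frechet_derivative (F s) (at (\<phi> s z))) (at (\<phi> s z))"
    using F frechet_derivative_works by blast
  then have "((\<lambda>y. F s (\<phi> s y)) has_derivative
      (\<lambda>a. frechet_derivative (F s) (at (\<phi> s z)) (dderiv [(0, a)] \<Phi> (s, z)))) (at z)"
    using has_derivative_compose[OF smooth_flow_space_derivative[OF \<phi> s z]] by (simp add: o_def \<Phi>_def)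
  ultimately show ?thesis
    unfolding \<Phi>_def by (metis has_derivative_unique)
qed

text \<open>The variational equation \<open>\<partial>\<^sub>t D\<phi>\<^sub>t = DF\<^sub>t(\<phi>\<^sub>t) \<circ> D\<phi>\<^sub>t\<close>: differentiate the flow equation in space
  and let the time and space derivatives commute.\<close>

lemma flow_variational_equation:
  fixes \<phi> F :: "real \<Rightarrow> 'a::euclidean_space \<Rightarrow> 'a"
  assumes F: "\<And>t y. F t differentiable (at y)"
    and T: "open T" and W: "open W"
    and \<phi>: "smooth_on (T \<times> W) (\<lambda>(t, z). \<phi> t z)"
    and flow: "\<And>t y. t \<in> T \<Longrightarrow> y \<in> W \<Longrightarrow> ((\<lambda>s. \<phi> s y) has_vector_derivative F t (\<phi> t y)) (at t)"
    and s: "s \<in> T" and z: "z \<in> W"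
  shows "((\<lambda>r. frechet_derivative (\<phi> r) (at z) a) has_derivative
      (\<lambda>h. h *\<^sub>R frechet_derivative (F s) (at (\<phi> s z)) (frechet_derivative (\<phi> s) (at z) a))) (at s)"
proof -
  define \<Phi> where "\<Phi> = (\<lambda>(t, z). \<phi> t z)"
  define M where "M = frechet_derivative (F s) (at (\<phi> s z))"
  define D where "D = frechet_derivative (dderiv [(0, a)] \<Phi>) (at (s, z))"
  have sz: "(s, z) \<in> T \<times> W"
    using s z by simp
  have space: "frechet_derivative (\<phi> r) (at z) = (\<lambda>a. dderiv [(0, a)] \<Phi> (r, z))" if "r \<in> T" for r
    using frechet_derivative_at[OF smooth_flow_space_derivative[OF \<phi> that z]] by (simp add: \<Phi>_def)
  have D: "(dderiv [(0, a)] \<Phi> has_derivative D) (at (s, z))"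
    unfolding D_def by (rule smooth_on_has_derivative[OF \<phi>[folded \<Phi>_def] sz])
  have "D (h, 0) = h *\<^sub>R M (frechet_derivative (\<phi> s) (at z) a)" for h
  proof -
    have "D (h, 0) = h *\<^sub>R D (1, 0)"
      using linear_cmul[OF has_derivative_linear[OF D], of h "(1, 0)"] by simp
    also have "D (1, 0) = dderiv [(1, 0), (0, a)] \<Phi> (s, z)"
      by (simp add: D_def)
    also have "\<dots> = dderiv [(0, a), (1, 0)] \<Phi> (s, z)"
      by (rule dderiv_swap[OF \<phi>[folded \<Phi>_def] sz])
    also have "\<dots> = M (frechet_derivative (\<phi> s) (at z) a)"
      unfolding \<Phi>_def M_def using smooth_flow_mixed_derivative[where F=F and \<phi>=\<phi>, OF F W \<phi> flow[OF s] s z] space[OF s]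
      by (simp add: \<Phi>_def)
    finally show ?thesis .
  qed
  with has_derivative_partial_fst[OF D]
  have "((\<lambda>r. dderiv [(0, a)] \<Phi> (r, z)) has_derivative (\<lambda>h. h *\<^sub>R M (frechet_derivative (\<phi> s) (at z) a))) (at s)"
    by simp
  then show ?thesis
    unfolding M_def by (rule has_derivative_transform_within_open[OF _ T s]) (simp add: space)
qed

lemma flow_preserves_volume:
  fixes \<phi> F :: "real \<Rightarrow> 'a::euclidean_space \<Rightarrow> 'a"
  assumes F: "\<And>t y. F t differentiable (at y)"
    and div_F: "\<And>t y. divergence (F t) y = 0"
    and T: "is_interval T" "open T" "t0 \<in> T" and W: "open W"
    and \<phi>: "smooth_on (T \<times> W) (\<lambda>(t, z). \<phi> t z)"
    and init: "\<And>z. z \<in> W \<Longrightarrow> \<phi> t0 z = z"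
    and flow: "\<And>t y. t \<in> T \<Longrightarrow> y \<in> W \<Longrightarrow> ((\<lambda>s. \<phi> s y) has_vector_derivative F t (\<phi> t y)) (at t)"
    and t: "t \<in> T" and z: "z \<in> W"
  shows "det_lin (frechet_derivative (\<phi> t) (at z)) = 1"
proof -
  define L where "L s = frechet_derivative (\<phi> s) (at z)" for s
  have "((\<lambda>r. det_lin (L r)) has_field_derivative 0) (at s within T)" if s: "s \<in> T" for s
  proof -
    define M where "M = frechet_derivative (F s) (at (\<phi> s z))"
    have "linear M"
      unfolding M_def using F frechet_derivative_works has_derivative_linear by blast
    moreover have "((\<lambda>r. L r a \<bullet> b) has_derivative (\<lambda>h. h * (M (L s a) \<bullet> b))) (at s within T)" for a b
      using bounded_linear.has_derivative[OF bounded_linear_inner_left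
          flow_variational_equation[OF F T(2) W \<phi> flow s z, of a], of b]
      by (simp add: L_def M_def has_derivative_at_withinI)
    ultimately have "((\<lambda>r. det_lin (L r)) has_derivative (\<lambda>h. h * (trace_lin M * det_lin (L s)))) (at s within T)"
      by (rule has_derivative_det_lin)
    moreover have "trace_lin M = 0"
      using div_F by (simp add: M_def divergence_eq_trace_lin)
    ultimately show ?thesis
      by (simp add: has_field_derivative_def mult_zero_left[abs_def])
  qed
  then obtain c where c: "\<And>s. s \<in> T \<Longrightarrow> det_lin (L s) = c"
    using has_field_derivative_zero_constant[OF is_interval_convex[OF T(1)]] by metis
  have "(\<phi> t0 has_derivative (\<lambda>x. x)) (at z)"
    by (rule has_derivative_transform_within_open[OF has_derivative_ident W z]) (simp add: init)
  then have "L t0 = (\<lambda>x. x)"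
    unfolding L_def by (rule frechet_derivative_at[symmetric])
  then have "c = 1"
    using c[OF T(3)] by (simp add: det_lin_id)
  then show ?thesis
    using c[OF t] by (simp add: L_def)
qed

theorem mainTheorem1:
  fixes H :: "'n::finite \<Rightarrow> (real ^ 3) \<times> (real ^ 3) \<Rightarrow> real"
    and tau :: "'n \<Rightarrow> real \<Rightarrow> real"
  assumes H_smooth: "\<And>I. smooth_on UNIV (H I)"
    and tau_smooth: "\<And>I. smooth_on UNIV (tau I)"
  shows "(\<forall>t z. divergence (hamiltonian_field H tau t) z = 0)
    \<and> (\<forall>(\<phi> :: real \<Rightarrow> ((real ^ 3) \<times> (real ^ 3)) ^ 'n \<Rightarrow> ((real ^ 3) \<times> (real ^ 3)) ^ 'n) T W t0.
         is_interval T \<and> open T \<and> t0 \<in> T \<and> open W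
         \<and> smooth_on (T \<times> W) (\<lambda>(t, z). \<phi> t z)
         \<and> (\<forall>z\<in>W. \<phi> t0 z = z)
         \<and> (\<forall>t\<in>T. \<forall>z\<in>W. ((\<lambda>s. \<phi> s z) has_vector_derivative
                               hamiltonian_field H tau t (\<phi> t z)) (at t))
         \<longrightarrow> (\<forall>t\<in>T. \<forall>z\<in>W. det_lin (frechet_derivative (\<phi> t) (at z)) = 1))"
proof (intro conjI allI impI ballI)
  note field = hamiltonian_field_differentiable_divergence_zero[where H=H, OF H_smooth]
  show "divergence (hamiltonian_field H tau t) z = 0" for t z
    by (rule field(2))
  fix \<phi> :: "real \<Rightarrow> ((real ^ 3) \<times> (real ^ 3)) ^ 'n \<Rightarrow> ((real ^ 3) \<times> (real ^ 3)) ^ 'n" and T W t0 t z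
  assume "is_interval T \<and> open T \<and> t0 \<in> T \<and> open W
         \<and> smooth_on (T \<times> W) (\<lambda>(t, z). \<phi> t z)
         \<and> (\<forall>z\<in>W. \<phi> t0 z = z)
         \<and> (\<forall>t\<in>T. \<forall>z\<in>W. ((\<lambda>s. \<phi> s z) has_vector_derivative
                               hamiltonian_field H tau t (\<phi> t z)) (at t))"
    and "t \<in> T" and "z \<in> W"
  then show "det_lin (frechet_derivative (\<phi> t) (at z)) = 1"
    using flow_preserves_volume[where F="hamiltonian_field H tau" and \<phi>=\<phi>, OF field] by blast
qed

end
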